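(* There exists a constant $L>0$ depending only on $\eta$ such that the following holds. Let $\gamma=(\gamma_1,\dots,\gamma_N)$ with $\gamma_i\in[0,p_i]$ for all $i$, and suppose $$\sum_{i:\,p_i>0}\frac{\gamma_i^4}{p_i^2}\le\frac{L}{n^2}.$$ Then for every $\rho\le\|\gamma\|_t$ we have $R^*_\rho\ge\eta$.
   Context: Binomial model: $N\ge2$, $n\ge2$ even. For $q\in[0,1]^N$ one observes $X_1,\dots,X_n$ i.i.d. in $\{0,1\}^N$ with mutually independent coordinates $X_l(j)\sim\mathrm{Ber}(q_j)$; $\mathbb P_q$ is their joint law. $\|x\|_t=(\sum_j|x_j|^t)^{1/t}$, $t\in[1,2]$. Known $p\in[0,1]^N$ with $\max_jp_j\le1/2$; $\eta\in(0,1)$. For a test $\psi:(\{0,1\}^N)^n\to\{0,1\}$, $R_\rho(\psi)=\mathbb P_p(\psi=1)+\sup_{q\in[0,1]^N:\|p-q\|_t\ge\rho}\mathbb P_q(\psi=0)$, and $R^*_\rho=\inf_\psi R_\rho(\psi)$. *)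

theory Defs
  imports "HOL-Analysis.Analysis"
begin

text \<open>Vectors in R^N are functions nat => real, only indices j < N matter.
  A sample (X_1,...,X_n) in ({0,1}^N)^n is a function X :: nat => nat => bool,
  X l j = coordinate j of observation l (l < n, j < N), False outside the range.\<close>

definition tnorm :: "nat \<Rightarrow> real \<Rightarrow> (nat \<Rightarrow> real) \<Rightarrow> real" where
  "tnorm N t x = (\<Sum>j<N. \<bar>x j\<bar> powr t) powr (1 / t)"

definition sample_space :: "nat \<Rightarrow> nat \<Rightarrow> (nat \<Rightarrow> nat \<Rightarrow> bool) set" where
  "sample_space N n = {X. \<forall>l j. (n \<le> l \<or> N \<le> j) \<longrightarrow> X l j = False}"

definition sample_prob :: "nat \<Rightarrow> nat \<Rightarrow> (nat \<Rightarrow> real) \<Rightarrow> (nat \<Rightarrow> nat \<Rightarrow> bool) \<Rightarrow> real" where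
  "sample_prob N n q X = (\<Prod>l<n. \<Prod>j<N. if X l j then q j else 1 - q j)"

definition test_prob :: "nat \<Rightarrow> nat \<Rightarrow> (nat \<Rightarrow> real) \<Rightarrow> ((nat \<Rightarrow> nat \<Rightarrow> bool) \<Rightarrow> bool) \<Rightarrow> bool \<Rightarrow> real" where
  "test_prob N n q psi b = (\<Sum>X\<in>sample_space N n. if psi X = b then sample_prob N n q X else 0)"

definition risk :: "nat \<Rightarrow> nat \<Rightarrow> real \<Rightarrow> (nat \<Rightarrow> real) \<Rightarrow> real \<Rightarrow> ((nat \<Rightarrow> nat \<Rightarrow> bool) \<Rightarrow> bool) \<Rightarrow> real" where
  "risk N n t p \<rho> psi = test_prob N n p psi True
     + (SUP q\<in>{q. (\<forall>j<N. 0 \<le> q j \<and> q j \<le> 1) \<and> tnorm N t (\<lambda>j. p j - q j) \<ge> \<rho>}. test_prob N n q psi False)"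

definition minimax_risk :: "nat \<Rightarrow> nat \<Rightarrow> real \<Rightarrow> (nat \<Rightarrow> real) \<Rightarrow> real \<Rightarrow> real" where
  "minimax_risk N n t p \<rho> = (INF psi. risk N n t p \<rho> psi)"

end

theory Submission
  imports Defs
begin

text \<open>Le Cam's two-point method with a mixture alternative. Average \<open>P\<^sub>q\<close> over the \<open>2\<^sup>N\<close>
  alternatives \<open>q = p \<plusminus> \<gamma>\<close> (independent random signs per coordinate); each lies at distance
  \<open>\<parallel>\<gamma>\<parallel>\<^sub>t\<close> from \<open>p\<close>. The risk of any test is at least \<open>1 - \<parallel>M - P\<^sub>p\<parallel>\<^sub>1\<close> for the mixture \<open>M\<close>,
  and the \<open>\<chi>\<^sup>2\<close>-divergence of \<open>M\<close> factorises over coordinates into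
  \<open>\<Prod>\<^sub>j ((1 + a\<^sub>j)\<^sup>n + (1 - a\<^sub>j)\<^sup>n)/2 \<le> exp (\<Sum>\<^sub>j (n a\<^sub>j)\<^sup>2)\<close> with \<open>a\<^sub>j = \<gamma>\<^sub>j\<^sup>2 / (p\<^sub>j (1 - p\<^sub>j)) \<le> 2 \<gamma>\<^sub>j\<^sup>2 / p\<^sub>j\<close>.
  So the hypothesis makes the \<open>\<chi>\<^sup>2\<close>-divergence, hence the \<open>L\<^sup>1\<close> distance, small.\<close>

definition sample_of :: "nat \<Rightarrow> nat \<Rightarrow> (nat \<times> nat \<Rightarrow> bool) \<Rightarrow> nat \<Rightarrow> nat \<Rightarrow> bool" where
  "sample_of N n h = (\<lambda>l j. if l < n \<and> j < N then h (l, j) else False)"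

lemma sample_space_eq_image:
  "sample_space N n = sample_of N n ` PiE ({..<n} \<times> {..<N}) (\<lambda>_. UNIV)"
proof (intro equalityI subsetI)
  fix X assume X: "X \<in> sample_space N n"
  let ?h = "restrict (\<lambda>(l, j). X l j) ({..<n} \<times> {..<N})"
  have "X = sample_of N n ?h"
    using X by (auto simp: sample_of_def sample_space_def fun_eq_iff)
  then show "X \<in> sample_of N n ` PiE ({..<n} \<times> {..<N}) (\<lambda>_. UNIV)" by force
qed (auto simp: sample_of_def sample_space_def)

lemma inj_on_sample_of: "inj_on (sample_of N n) (PiE ({..<n} \<times> {..<N}) (\<lambda>_. UNIV))"
proof (rule inj_onI)
  fix x y assume x: "x \<in> PiE ({..<n} \<times> {..<N}) (\<lambda>_. UNIV)"
    and y: "y \<in> PiE ({..<n} \<times> {..<N}) (\<lambda>_. UNIV)" and eq: "sample_of N n x = sample_of N n y"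
  show "x = y"
  proof (rule PiE_ext[OF x y])
    fix i assume "i \<in> {..<n} \<times> {..<N}"
    then show "x i = y i"
      using fun_cong[OF fun_cong[OF eq, of "fst i"], of "snd i"] by (auto simp: sample_of_def)
  qed
qed

lemma finite_sample_space: "finite (sample_space N n)"
  by (simp add: sample_space_eq_image finite_PiE)

lemma sum_sample_space_prod:
  fixes f :: "nat \<Rightarrow> nat \<Rightarrow> bool \<Rightarrow> real"
  shows "(\<Sum>X\<in>sample_space N n. \<Prod>l<n. \<Prod>j<N. f l j (X l j))
       = (\<Prod>l<n. \<Prod>j<N. f l j True + f l j False)"
proof -
  let ?I = "{..<n} \<times> {..<N}"
  have "(\<Sum>X\<in>sample_space N n. \<Prod>l<n. \<Prod>j<N. f l j (X l j))
      = (\<Sum>h\<in>PiE ?I (\<lambda>_. UNIV). \<Prod>l<n. \<Prod>j<N. f l j (sample_of N n h l j))"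
    unfolding sample_space_eq_image by (rule sum.reindex[OF inj_on_sample_of, unfolded comp_def])
  also have "\<dots> = (\<Sum>h\<in>PiE ?I (\<lambda>_. UNIV). \<Prod>x\<in>?I. f (fst x) (snd x) (h x))"
    by (intro sum.cong refl) (simp add: sample_of_def prod.cartesian_product case_prod_beta')
  also have "\<dots> = (\<Prod>x\<in>?I. \<Sum>b\<in>UNIV. f (fst x) (snd x) b)"
    by (rule prod_sum_PiE[symmetric]) auto
  also have "\<dots> = (\<Prod>l<n. \<Prod>j<N. f l j True + f l j False)"
    by (simp add: UNIV_bool add.commute prod.cartesian_product case_prod_beta')
  finally show ?thesis .
qed

lemma sum_sample_prob: "(\<Sum>X\<in>sample_space N n. sample_prob N n q X) = 1"
  unfolding sample_prob_def
  using sum_sample_space_prod[of "\<lambda>l j b. if b then q j else 1 - q j" N n] by simp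

lemma sample_prob_nonneg: "\<forall>j<N. 0 \<le> q j \<and> q j \<le> 1 \<Longrightarrow> 0 \<le> sample_prob N n q X"
  unfolding sample_prob_def by (intro prod_nonneg) auto

lemma test_prob_False: "test_prob N n q psi False = 1 - test_prob N n q psi True"
proof -
  have "test_prob N n q psi False + test_prob N n q psi True
      = (\<Sum>X\<in>sample_space N n. sample_prob N n q X)"
    unfolding test_prob_def by (subst sum.distrib[symmetric]) (intro sum.cong refl, auto)
  then show ?thesis by (simp add: sum_sample_prob)
qed

lemma risk_ge_one_minus_mixture_dist:
  fixes Q :: "'e \<Rightarrow> nat \<Rightarrow> real"
  assumes "finite E" "E \<noteq> {}"
    and alternatives: "\<And>e. e \<in> E \<Longrightarrow> (\<forall>j<N. 0 \<le> Q e j \<and> Q e j \<le> 1) \<and> \<rho> \<le> tnorm N t (\<lambda>j. p j - Q e j)"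
  shows "1 - (\<Sum>X\<in>sample_space N n.
            \<bar>(\<Sum>e\<in>E. sample_prob N n (Q e) X) / card E - sample_prob N n p X\<bar>) \<le> risk N n t p \<rho> psi"
proof -
  let ?S = "sample_space N n" and ?P = "sample_prob N n p"
  let ?M = "\<lambda>X. (\<Sum>e\<in>E. sample_prob N n (Q e) X) / card E"
  let ?A = "{q. (\<forall>j<N. 0 \<le> q j \<and> q j \<le> 1) \<and> tnorm N t (\<lambda>j. p j - q j) \<ge> \<rho>}"
  let ?f = "\<lambda>q. test_prob N n q psi False"
  have card: "0 < real (card E)" using assms by (simp add: card_gt_0_iff)
  have bdd: "bdd_above (?f ` ?A)"
  proof (rule bdd_aboveI2)
    fix q assume "q \<in> ?A"
    then have "?f q \<le> (\<Sum>X\<in>?S. sample_prob N n q X)"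
      unfolding test_prob_def by (intro sum_mono) (auto intro: sample_prob_nonneg)
    then show "?f q \<le> 1" by (simp add: sum_sample_prob)
  qed
  have "(\<Sum>e\<in>E. ?f (Q e)) \<le> (\<Sum>e\<in>E. (SUP q\<in>?A. ?f q))"
    using alternatives by (intro sum_mono cSUP_upper bdd) auto
  then have sup: "(\<Sum>e\<in>E. ?f (Q e)) / card E \<le> (SUP q\<in>?A. ?f q)"
    using card by (simp add: pos_divide_le_eq mult.commute)
  have "(\<Sum>e\<in>E. ?f (Q e)) / card E = 1 - (\<Sum>e\<in>E. test_prob N n (Q e) psi True) / card E"
    using card by (simp add: test_prob_False sum_subtractf diff_divide_distrib)
  also have "(\<Sum>e\<in>E. test_prob N n (Q e) psi True) / card E = (\<Sum>X\<in>?S. if psi X then ?M X else 0)"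
    unfolding test_prob_def sum_divide_distrib by (subst sum.swap) (intro sum.cong refl, auto)
  finally have avg: "(\<Sum>e\<in>E. ?f (Q e)) / card E = 1 - (\<Sum>X\<in>?S. if psi X then ?M X else 0)" .
  have "(\<Sum>X\<in>?S. if psi X then ?M X else 0) - test_prob N n p psi True
      = (\<Sum>X\<in>?S. if psi X then ?M X - ?P X else 0)"
    unfolding test_prob_def by (subst sum_subtractf[symmetric]) (intro sum.cong refl, auto)
  also have "\<dots> \<le> (\<Sum>X\<in>?S. \<bar>?M X - ?P X\<bar>)"
    by (intro sum_mono) auto
  finally show ?thesis
    using sup avg unfolding risk_def by linarith
qed

lemma abs_diff_le_chi_term:
  fixes x y c :: real
  assumes "0 \<le> y" "y = 0 \<Longrightarrow> x = 0" "0 < c"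
  shows "\<bar>x - y\<bar> \<le> ((x ^ 2 / y - 2 * x + y) / c + c * y) / 2"
proof (cases "y = 0")
  case False
  then have y: "0 < y" using assms by auto
  have "0 \<le> (\<bar>x - y\<bar> - y * c) ^ 2" by simp
  then have "2 * \<bar>x - y\<bar> * (y * c) \<le> (x - y) ^ 2 + (y * c) ^ 2"
    by (simp add: power2_eq_square algebra_simps abs_mult_self_eq)
  moreover have "((x ^ 2 / y - 2 * x + y) / c + c * y) / 2 = ((x - y) ^ 2 + (y * c) ^ 2) / (2 * (y * c))"
    using y assms by (simp add: field_simps power2_eq_square)
  ultimately show ?thesis using y assms by (simp add: field_simps)
qed (use assms in simp)

lemma l1_dist_le_of_chi_square:
  fixes M P :: "'a \<Rightarrow> real"
  assumes "finite S" "0 < c"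
    and P: "\<And>x. x \<in> S \<Longrightarrow> 0 \<le> P x" "sum P S = 1"
    and M: "\<And>x. x \<in> S \<Longrightarrow> P x = 0 \<Longrightarrow> M x = 0" "sum M S = 1"
    and chi: "(\<Sum>x\<in>S. M x ^ 2 / P x) \<le> 1 + c ^ 2"
  shows "(\<Sum>x\<in>S. \<bar>M x - P x\<bar>) \<le> c"
proof -
  have "(\<Sum>x\<in>S. \<bar>M x - P x\<bar>) \<le> (\<Sum>x\<in>S. ((M x ^ 2 / P x - 2 * M x + P x) / c + c * P x) / 2)"
    using assms by (intro sum_mono abs_diff_le_chi_term) auto
  also have "\<dots> = (\<Sum>x\<in>S. M x ^ 2 / P x * (1 / (2 * c)) - M x / c + P x * (1 / (2 * c) + c / 2))"
    using \<open>0 < c\<close> by (intro sum.cong refl) (simp add: field_simps)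
  also have "\<dots> = (\<Sum>x\<in>S. M x ^ 2 / P x) / (2 * c) - sum M S / c + sum P S * (1 / (2 * c) + c / 2)"
    by (simp add: sum.distrib sum_subtractf sum_divide_distrib sum_distrib_right)
  also have "\<dots> = ((\<Sum>x\<in>S. M x ^ 2 / P x) - 1) / (2 * c) + c / 2"
    using P M \<open>0 < c\<close> by (simp add: field_simps)
  also have "\<dots> \<le> c ^ 2 / (2 * c) + c / 2"
    using chi \<open>0 < c\<close> by (intro add_right_mono divide_right_mono) auto
  also have "\<dots> = c" using \<open>0 < c\<close> by (simp add: power2_eq_square)
  finally show ?thesis .
qed

lemma bernoulli_chi_factor:
  fixes p g s s' :: real
  assumes "0 \<le> p" "p < 1" "p = 0 \<Longrightarrow> g = 0" "s = 1 \<or> s = -1" "s' = 1 \<or> s' = -1"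
  shows "(p + s * g) * (p + s' * g) / p + (1 - (p + s * g)) * (1 - (p + s' * g)) / (1 - p)
       = 1 + s * s' * (g ^ 2 / (p * (1 - p)))"
proof (cases "p = 0")
  case False
  then have "0 < p" "0 < 1 - p" using assms by auto
  then show ?thesis by (simp add: field_simps power2_eq_square)
qed (use assms in simp)

lemma binomial_cosh_le:
  fixes a :: real
  assumes "0 \<le> a" "a \<le> 1" "real n * a \<le> 1"
  shows "((1 + a) ^ n + (1 - a) ^ n) / 2 \<le> 1 + (real n * a) ^ 2"
proof -
  define x where "x = real n * a"
  have x: "0 \<le> x" "x \<le> 1" using assms by (auto simp: x_def)
  have "(1 + a) ^ n \<le> exp a ^ n"
    by (rule power_mono) (use assms in \<open>auto simp: exp_ge_add_one_self add.commute\<close>)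
  also have "\<dots> = exp x" by (simp add: x_def exp_of_nat_mult)
  also have "\<dots> \<le> 1 + x + x ^ 2" using exp_bound x by simp
  finally have plus: "(1 + a) ^ n \<le> 1 + x + x ^ 2" .
  have "(1 - a) ^ n \<le> exp (- a) ^ n"
    by (rule power_mono) (use assms exp_ge_add_one_self[of "- a"] in auto)
  also have "\<dots> = 1 / exp x" by (simp add: x_def exp_minus exp_of_nat_mult[symmetric] field_simps)
  also have "\<dots> \<le> 1 / (1 + x)"
    using x by (intro divide_left_mono) (auto simp: exp_ge_add_one_self add.commute intro: add_pos_nonneg)
  also have "\<dots> \<le> 1 - x + x ^ 2"
    using x by (simp add: field_simps power2_eq_square mult_nonneg_nonneg)
  finally have minus: "(1 - a) ^ n \<le> 1 - x + x ^ 2" .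
  from plus minus show ?thesis by (simp add: x_def[symmetric])
qed

lemma bernoulli_chi_weight_sq_le:
  fixes p g :: real
  assumes "0 < p" "p \<le> 1 / 2"
  shows "(g ^ 2 / (p * (1 - p))) ^ 2 \<le> 4 * (g ^ 4 / p ^ 2)"
proof -
  have "0 \<le> p * (1 / 2 - p)" using assms by simp
  then have "p / 2 \<le> p * (1 - p)" by (simp add: algebra_simps)
  then have "(p / 2) ^ 2 \<le> (p * (1 - p)) ^ 2" using assms by (intro power_mono) auto
  then have "g ^ 4 / (p * (1 - p)) ^ 2 \<le> g ^ 4 / (p / 2) ^ 2"
    using assms by (intro divide_left_mono) auto
  then show ?thesis by (simp add: power_divide mult.commute flip: power_mult)
qed

definition sign_vectors :: "nat \<Rightarrow> (nat \<Rightarrow> bool) set" where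
  "sign_vectors N = PiE {..<N} (\<lambda>_. UNIV)"

definition sign :: "bool \<Rightarrow> real" where
  "sign b = (if b then 1 else -1)"

definition perturb :: "(nat \<Rightarrow> real) \<Rightarrow> (nat \<Rightarrow> real) \<Rightarrow> (nat \<Rightarrow> bool) \<Rightarrow> nat \<Rightarrow> real" where
  "perturb p \<gamma> e j = p j + sign (e j) * \<gamma> j"

definition mixture_prob :: "nat \<Rightarrow> nat \<Rightarrow> (nat \<Rightarrow> real) \<Rightarrow> (nat \<Rightarrow> real) \<Rightarrow> (nat \<Rightarrow> nat \<Rightarrow> bool) \<Rightarrow> real" where
  "mixture_prob N n p \<gamma> X = (\<Sum>e\<in>sign_vectors N. sample_prob N n (perturb p \<gamma> e) X) / 2 ^ N"

text \<open>Where \<open>p\<^sub>j = 0\<close> we also have \<open>\<gamma>\<^sub>j = 0\<close>, and the junk value \<open>0 / 0 = 0\<close> makes that coordinate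
  contribute nothing.\<close>
definition chi_weight :: "(nat \<Rightarrow> real) \<Rightarrow> (nat \<Rightarrow> real) \<Rightarrow> nat \<Rightarrow> real" where
  "chi_weight p \<gamma> j = \<gamma> j ^ 2 / (p j * (1 - p j))"

lemma finite_sign_vectors: "finite (sign_vectors N)"
  by (simp add: sign_vectors_def finite_PiE)

lemma card_sign_vectors: "card (sign_vectors N) = 2 ^ N"
  by (simp add: sign_vectors_def card_PiE)

lemma sign_cases: "sign b = 1 \<or> sign b = -1"
  by (simp add: sign_def)

lemma sign_vectors_nonempty: "sign_vectors N \<noteq> {}"
  by (simp add: sign_vectors_def PiE_eq_empty_iff)

lemma sum_sign_vectors_prod:
  fixes h :: "nat \<Rightarrow> bool \<Rightarrow> real"
  shows "(\<Sum>e\<in>sign_vectors N. \<Prod>j<N. h j (e j)) = (\<Prod>j<N. h j True + h j False)"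
  unfolding sign_vectors_def by (subst prod_sum_PiE[symmetric]) (auto simp: UNIV_bool add.commute)

context
  fixes N n :: nat and p \<gamma> :: "nat \<Rightarrow> real"
  assumes p: "\<forall>j<N. 0 \<le> p j \<and> p j \<le> 1 / 2" and \<gamma>: "\<forall>i<N. 0 \<le> \<gamma> i \<and> \<gamma> i \<le> p i"
begin

lemma perturb_valid: "\<forall>j<N. 0 \<le> perturb p \<gamma> e j \<and> perturb p \<gamma> e j \<le> 1"
proof (intro allI impI)
  fix j assume "j < N"
  then have "0 \<le> p j" "p j \<le> 1 / 2" "0 \<le> \<gamma> j" "\<gamma> j \<le> p j" using p \<gamma> by auto
  then show "0 \<le> perturb p \<gamma> e j \<and> perturb p \<gamma> e j \<le> 1"
    using sign_cases[of "e j"] by (auto simp: perturb_def)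
qed

lemma tnorm_perturb: "tnorm N t (\<lambda>j. p j - perturb p \<gamma> e j) = tnorm N t \<gamma>"
  unfolding tnorm_def
proof (intro arg_cong[where f="\<lambda>x. x powr (1 / t)"] sum.cong refl)
  fix j show "\<bar>p j - perturb p \<gamma> e j\<bar> powr t = \<bar>\<gamma> j\<bar> powr t"
    using sign_cases[of "e j"] by (auto simp: perturb_def)
qed

lemma sample_prob_perturb_eq_0:
  assumes "sample_prob N n p X = 0"
  shows "sample_prob N n (perturb p \<gamma> e) X = 0"
proof -
  obtain l j where lj: "l < n" "j < N" and "(if X l j then p j else 1 - p j) = 0"
    using assms unfolding sample_prob_def by (auto simp: prod_zero_iff)
  then have "X l j" "p j = 0" "\<gamma> j = 0" using p \<gamma> by (auto split: if_splits)
  then have "(if X l j then perturb p \<gamma> e j else 1 - perturb p \<gamma> e j) = 0"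
    by (simp add: perturb_def)
  then have "(\<Prod>j<N. if X l j then perturb p \<gamma> e j else 1 - perturb p \<gamma> e j) = 0"
    by (rule prod_zero[OF finite_lessThan bexI]) (simp add: lj)
  then show ?thesis
    unfolding sample_prob_def by (rule prod_zero[OF finite_lessThan bexI]) (simp add: lj)
qed

lemma sum_sample_prob_perturb_products:
  "(\<Sum>X\<in>sample_space N n.
      sample_prob N n (perturb p \<gamma> e) X * sample_prob N n (perturb p \<gamma> e') X / sample_prob N n p X)
   = (\<Prod>j<N. (1 + sign (e j) * sign (e' j) * chi_weight p \<gamma> j) ^ n)"
proof -
  define f where "f (l::nat) j b =
    (if b then perturb p \<gamma> e j else 1 - perturb p \<gamma> e j)
    * (if b then perturb p \<gamma> e' j else 1 - perturb p \<gamma> e' j) / (if b then p j else 1 - p j)" for l j b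
  have "(\<Sum>X\<in>sample_space N n.
      sample_prob N n (perturb p \<gamma> e) X * sample_prob N n (perturb p \<gamma> e') X / sample_prob N n p X)
      = (\<Sum>X\<in>sample_space N n. \<Prod>l<n. \<Prod>j<N. f l j (X l j))"
    by (intro sum.cong refl) (simp add: sample_prob_def f_def prod_dividef prod.distrib)
  also have "\<dots> = (\<Prod>l<n. \<Prod>j<N. f l j True + f l j False)"
    by (rule sum_sample_space_prod)
  also have "\<dots> = (\<Prod>l<n. \<Prod>j<N. 1 + sign (e j) * sign (e' j) * chi_weight p \<gamma> j)"
  proof (intro prod.cong refl)
    fix l j assume "j \<in> {..<N}"
    then show "f l j True + f l j False = 1 + sign (e j) * sign (e' j) * chi_weight p \<gamma> j"
      unfolding f_def perturb_def chi_weight_def using p \<gamma> sign_cases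
      by (simp only: if_True if_False, intro bernoulli_chi_factor) force+
  qed
  finally show ?thesis by (simp add: prod_power_distrib)
qed

lemma chi_square_mixture:
  "(\<Sum>X\<in>sample_space N n. mixture_prob N n p \<gamma> X ^ 2 / sample_prob N n p X)
   = (\<Prod>j<N. ((1 + chi_weight p \<gamma> j) ^ n + (1 - chi_weight p \<gamma> j) ^ n) / 2)"
proof -
  let ?E = "sign_vectors N" and ?P = "sample_prob N n p" and ?Q = "\<lambda>e. sample_prob N n (perturb p \<gamma> e)"
  let ?B = "\<Prod>j<N. (1 + chi_weight p \<gamma> j) ^ n + (1 - chi_weight p \<gamma> j) ^ n"
  have "(\<Sum>X\<in>sample_space N n. mixture_prob N n p \<gamma> X ^ 2 / ?P X)
     = (\<Sum>X\<in>sample_space N n. \<Sum>e\<in>?E. \<Sum>e'\<in>?E. ?Q e X * ?Q e' X / ?P X) / (2 ^ N) ^ 2"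
    by (simp add: mixture_prob_def power2_eq_square sum_product sum_divide_distrib mult.commute)
  also have "(\<Sum>X\<in>sample_space N n. \<Sum>e\<in>?E. \<Sum>e'\<in>?E. ?Q e X * ?Q e' X / ?P X)
     = (\<Sum>e'\<in>?E. \<Sum>e\<in>?E. \<Sum>X\<in>sample_space N n. ?Q e X * ?Q e' X / ?P X)"
    by (subst sum.swap, subst sum.swap) (simp add: sum.swap[of _ _ "sample_space N n"])
  also have "\<dots> = (\<Sum>e'\<in>?E. ?B)"
  proof (intro sum.cong refl)
    fix e' :: "nat \<Rightarrow> bool"
    show "(\<Sum>e\<in>?E. \<Sum>X\<in>sample_space N n. ?Q e X * ?Q e' X / ?P X) = ?B"
      unfolding sum_sample_prob_perturb_products
        sum_sign_vectors_prod[where h="\<lambda>j b. (1 + sign b * sign (e' j) * chi_weight p \<gamma> j) ^ n"]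
      by (intro prod.cong refl) (auto simp: sign_def)
  qed
  also have "\<dots> / (2 ^ N) ^ 2 = ?B / 2 ^ N" by (simp add: card_sign_vectors power2_eq_square)
  finally show ?thesis by (simp add: prod_dividef)
qed

lemma chi_weight_bounds:
  assumes "j < N"
  shows "0 \<le> chi_weight p \<gamma> j" "chi_weight p \<gamma> j \<le> 1"
proof -
  have a: "0 \<le> p j" "p j \<le> 1 / 2" "0 \<le> \<gamma> j" "\<gamma> j \<le> p j" using p \<gamma> assms by auto
  then show "0 \<le> chi_weight p \<gamma> j" by (simp add: chi_weight_def)
  have "\<gamma> j ^ 2 \<le> p j ^ 2" using a by (intro power_mono) auto
  also have "\<dots> \<le> p j * (1 - p j)" using a by (simp add: power2_eq_square mult_left_mono)
  moreover have "p j = 0 \<or> 0 < p j * (1 - p j)" using a by (cases "p j = 0") auto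
  ultimately show "chi_weight p \<gamma> j \<le> 1"
    by (auto simp: chi_weight_def)
qed

lemma sum_chi_weight_sq_le:
  "(\<Sum>j<N. chi_weight p \<gamma> j ^ 2) \<le> 4 * (\<Sum>i\<in>{i. i < N \<and> 0 < p i}. \<gamma> i ^ 4 / p i ^ 2)"
proof -
  let ?F = "{i. i < N \<and> 0 < p i}"
  have "(\<Sum>j<N. chi_weight p \<gamma> j ^ 2) = (\<Sum>j\<in>?F. chi_weight p \<gamma> j ^ 2)"
  proof (rule sum.mono_neutral_right)
    show "\<forall>i\<in>{..<N} - ?F. chi_weight p \<gamma> i ^ 2 = 0"
      using p by (force simp: chi_weight_def)
  qed auto
  also have "\<dots> \<le> (\<Sum>j\<in>?F. 4 * (\<gamma> j ^ 4 / p j ^ 2))"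
    using p unfolding chi_weight_def by (intro sum_mono bernoulli_chi_weight_sq_le) auto
  finally show ?thesis by (simp add: sum_distrib_left)
qed

lemma chi_square_mixture_le_exp:
  assumes small: "real n ^ 2 * (\<Sum>j<N. chi_weight p \<gamma> j ^ 2) \<le> 1"
  shows "(\<Sum>X\<in>sample_space N n. mixture_prob N n p \<gamma> X ^ 2 / sample_prob N n p X)
       \<le> exp (real n ^ 2 * (\<Sum>j<N. chi_weight p \<gamma> j ^ 2))"
proof -
  let ?a = "chi_weight p \<gamma>"
  have "(\<Prod>j<N. ((1 + ?a j) ^ n + (1 - ?a j) ^ n) / 2) \<le> (\<Prod>j<N. exp ((real n * ?a j) ^ 2))"
  proof (intro prod_mono conjI)
    fix j assume "j \<in> {..<N}"
    then have j: "j < N" by simp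
    have "(real n * ?a j) ^ 2 = real n ^ 2 * ?a j ^ 2" by (rule power_mult_distrib)
    also have "\<dots> \<le> real n ^ 2 * (\<Sum>j<N. ?a j ^ 2)"
      using j by (intro mult_left_mono member_le_sum) auto
    finally have "(real n * ?a j) ^ 2 \<le> 1 ^ 2" using small by simp
    then have "real n * ?a j \<le> 1"
      by (rule power2_le_imp_le) simp
    then have "((1 + ?a j) ^ n + (1 - ?a j) ^ n) / 2 \<le> 1 + (real n * ?a j) ^ 2"
      using chi_weight_bounds[OF j] by (intro binomial_cosh_le) auto
    also have "\<dots> \<le> exp ((real n * ?a j) ^ 2)"
      using exp_ge_add_one_self[of "(real n * ?a j) ^ 2"] by linarith
    finally show "((1 + ?a j) ^ n + (1 - ?a j) ^ n) / 2 \<le> exp ((real n * ?a j) ^ 2)" .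
    show "0 \<le> ((1 + ?a j) ^ n + (1 - ?a j) ^ n) / 2"
      using chi_weight_bounds[OF j] by simp
  qed
  also have "\<dots> = exp (real n ^ 2 * (\<Sum>j<N. ?a j ^ 2))"
    by (simp add: exp_sum power_mult_distrib sum_distrib_left)
  finally show ?thesis
    unfolding chi_square_mixture .
qed

lemma sum_mixture_prob: "(\<Sum>X\<in>sample_space N n. mixture_prob N n p \<gamma> X) = 1"
  unfolding mixture_prob_def sum_divide_distrib[symmetric]
  by (subst sum.swap) (simp add: sum_sample_prob card_sign_vectors)

lemma minimax_risk_ge:
  assumes "0 < c" "c \<le> 1" and chi: "exp (real n ^ 2 * (\<Sum>j<N. chi_weight p \<gamma> j ^ 2)) \<le> 1 + c ^ 2"
    and "\<rho> \<le> tnorm N t \<gamma>"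
  shows "1 - c \<le> minimax_risk N n t p \<rho>"
proof -
  have "real n ^ 2 * (\<Sum>j<N. chi_weight p \<gamma> j ^ 2) \<le> c ^ 2"
    using chi exp_ge_add_one_self[of "real n ^ 2 * (\<Sum>j<N. chi_weight p \<gamma> j ^ 2)"] by linarith
  also have "c ^ 2 \<le> 1" using \<open>0 < c\<close> \<open>c \<le> 1\<close> by (simp add: power_le_one)
  finally have "real n ^ 2 * (\<Sum>j<N. chi_weight p \<gamma> j ^ 2) \<le> 1" .
  then have chi_square: "(\<Sum>X\<in>sample_space N n. mixture_prob N n p \<gamma> X ^ 2 / sample_prob N n p X) \<le> 1 + c ^ 2"
    using chi chi_square_mixture_le_exp by (meson order_trans)
  have l1: "(\<Sum>X\<in>sample_space N n. \<bar>mixture_prob N n p \<gamma> X - sample_prob N n p X\<bar>) \<le> c"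
  proof (rule l1_dist_le_of_chi_square[OF finite_sample_space \<open>0 < c\<close> _ sum_sample_prob _
        sum_mixture_prob chi_square])
    show "0 \<le> sample_prob N n p X" for X
      using p by (intro sample_prob_nonneg) auto
    show "mixture_prob N n p \<gamma> X = 0" if "sample_prob N n p X = 0" for X
      using that by (simp add: mixture_prob_def sample_prob_perturb_eq_0)
  qed
  have "1 - c \<le> risk N n t p \<rho> psi" for psi
  proof -
    have "1 - (\<Sum>X\<in>sample_space N n. \<bar>(\<Sum>e\<in>sign_vectors N. sample_prob N n (perturb p \<gamma> e) X)
              / card (sign_vectors N) - sample_prob N n p X\<bar>) \<le> risk N n t p \<rho> psi"
      using perturb_valid tnorm_perturb \<open>\<rho> \<le> tnorm N t \<gamma>\<close>
      by (intro risk_ge_one_minus_mixture_dist finite_sign_vectors sign_vectors_nonempty) auto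
    with l1 show ?thesis by (simp add: mixture_prob_def card_sign_vectors)
  qed
  then show ?thesis
    unfolding minimax_risk_def by (intro cINF_greatest) auto
qed

end

theorem lemmaA2:
  fixes \<eta> :: real
  assumes "0 < \<eta>" and "\<eta> < 1"
  shows "\<exists>L>0. \<forall>(N::nat) (n::nat) (t::real) (p::nat \<Rightarrow> real) (\<gamma>::nat \<Rightarrow> real) (\<rho>::real).
     2 \<le> N \<longrightarrow> 2 \<le> n \<longrightarrow> even n \<longrightarrow> 1 \<le> t \<longrightarrow> t \<le> 2 \<longrightarrow>
     (\<forall>j<N. 0 \<le> p j \<and> p j \<le> 1 / 2) \<longrightarrow>
     (\<forall>i<N. 0 \<le> \<gamma> i \<and> \<gamma> i \<le> p i) \<longrightarrow>
     (\<Sum>i\<in>{i. i < N \<and> 0 < p i}. \<gamma> i ^ 4 / p i ^ 2) \<le> L / real n ^ 2 \<longrightarrow>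
     \<rho> \<le> tnorm N t \<gamma> \<longrightarrow>
     minimax_risk N n t p \<rho> \<ge> \<eta>"
proof -
  define c where "c = 1 - \<eta>"
  have c: "0 < c" "c \<le> 1" using assms by (auto simp: c_def)
  define L where "L = ln (1 + c ^ 2) / 4"
  have "\<eta> \<le> minimax_risk N n t p \<rho>"
    if "2 \<le> n" and p: "\<forall>j<N. 0 \<le> p j \<and> p j \<le> 1 / 2" and \<gamma>: "\<forall>i<N. 0 \<le> \<gamma> i \<and> \<gamma> i \<le> p i"
      and small: "(\<Sum>i\<in>{i. i < N \<and> 0 < p i}. \<gamma> i ^ 4 / p i ^ 2) \<le> L / real n ^ 2"
      and "\<rho> \<le> tnorm N t \<gamma>"
    for N n t p \<gamma> \<rho>
  proof -
    have "real n ^ 2 * (\<Sum>j<N. chi_weight p \<gamma> j ^ 2)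
        \<le> real n ^ 2 * (4 * (\<Sum>i\<in>{i. i < N \<and> 0 < p i}. \<gamma> i ^ 4 / p i ^ 2))"
      using sum_chi_weight_sq_le[OF p \<gamma>] by (intro mult_left_mono) auto
    also have "\<dots> \<le> real n ^ 2 * (4 * (L / real n ^ 2))"
      using small by (intro mult_left_mono) auto
    also have "\<dots> = ln (1 + c ^ 2)" using \<open>2 \<le> n\<close> by (simp add: L_def)
    finally have "exp (real n ^ 2 * (\<Sum>j<N. chi_weight p \<gamma> j ^ 2)) \<le> 1 + c ^ 2"
      by (metis exp_le_cancel_iff exp_ln add_pos_nonneg zero_less_one zero_le_power2)
    with minimax_risk_ge[OF p \<gamma> c] \<open>\<rho> \<le> tnorm N t \<gamma>\<close> show ?thesis
      by (simp add: c_def)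
  qed
  moreover have "0 < L" using c by (simp add: L_def ln_gt_zero)
  ultimately show ?thesis by blast
qed

end
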